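(* Let $p\in(1/2,1)$, $\alpha=p/(1-p)$, and for $r=1,2,\ldots$ let $\epsilon_r=\dfrac{\alpha-\alpha^{1/r}}{\alpha^{1/r+1}-1}$. Then $(\epsilon_r)_{r\ge1}$ is an increasing sequence, and for every $r\ge1$ and every $\epsilon\in[\epsilon_r,\epsilon_{r+1})$, at least $r+1$ consecutive $Y$ observations are necessary for a $Y$ cascade to begin: on every path of the walk that leaves $[-1,1]$ above $1$ at some step $n$, the last $r+1$ steps (steps $n-r,\ldots,n$) are all up-steps ($Y$ observations).
   Context: Observational learning model: an item has true value $V\in\{G,B\}$; agents arrive sequentially, each receives a private binary signal equal to the "correct" signal with probability $p\in(1/2,1)$, and each agent is independently fake with probability $\epsilon\in[0,1)$ (a fake agent's recorded action is always $Y$ = buy). Define $a=p+(1-p)\epsilon$, $b=p(1-\epsilon)$ and $\eta=\eta(\epsilon)=\log\big(a/(1-b)\big)/\log\alpha\in(0,1]$. Before any cascade, the agents' sufficient statistic $h$ evolves as the following walk: $h_0=0$ and at each step $h$ increases by $\eta$ (an observed $Y$) or decreases by $1$ (an observed $N$); the walk is stopped the first time it leaves $[-1,1]$. Leaving above $1$ is the beginning of a $Y$ cascade, leaving below $-1$ of an $N$ cascade. *)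

theory Defs
  imports Complex_Main
begin

definition alpha :: "real \<Rightarrow> real" where
  "alpha p = p / (1 - p)"

definition eps_r :: "real \<Rightarrow> nat \<Rightarrow> real" where
  "eps_r p r = (alpha p - alpha p powr (1 / real r)) / (alpha p powr (1 / real r + 1) - 1)"

definition eta :: "real \<Rightarrow> real \<Rightarrow> real" where
  "eta p \<epsilon> = (let a = p + (1 - p) * \<epsilon>; b = p * (1 - \<epsilon>) in ln (a / (1 - b)) / ln (alpha p))"

text \<open>A path is a sequence of observations s :: nat => bool (True = Y = up-step by eta,
  False = N = down-step by 1); step i (0-based) is the (i+1)-th observation.
  walk_h p eps s n is the value of h after n steps (before stopping).\<close>
definition walk_h :: "real \<Rightarrow> real \<Rightarrow> (nat \<Rightarrow> bool) \<Rightarrow> nat \<Rightarrow> real" where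
  "walk_h p \<epsilon> s n = (\<Sum>i<n. if s i then eta p \<epsilon> else -1)"

definition leaves_above_at :: "real \<Rightarrow> real \<Rightarrow> (nat \<Rightarrow> bool) \<Rightarrow> nat \<Rightarrow> bool" where
  "leaves_above_at p \<epsilon> s n \<longleftrightarrow>
     walk_h p \<epsilon> s n > 1 \<and> (\<forall>k<n. -1 \<le> walk_h p \<epsilon> s k \<and> walk_h p \<epsilon> s k \<le> 1)"

end

theory Submission
  imports Defs
begin

text \<open>With \<open>A = \<alpha>\<close>, the increment of an up-step is \<open>\<eta> = log A ((A + \<epsilon>) / (1 + A \<epsilon>))\<close>, and
  \<open>\<epsilon>\<^sub>r = (A - B) / (A B - 1)\<close> with \<open>B = A\<^bsup>1/r\<^esup>\<close> is exactly the value of \<open>\<epsilon>\<close> at which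
  \<open>(A + \<epsilon>) / (1 + A \<epsilon>) = B\<close>, i.e. \<open>\<eta> = 1/r\<close>. Since this ratio decreases in \<open>\<epsilon>\<close>, \<open>\<epsilon> \<ge> \<epsilon>\<^sub>r\<close> gives
  \<open>\<eta> \<le> 1/r\<close>. A walk confined to \<open>[-1, 1]\<close> sits at height at most 0 right after a down-step
  (and at the start), and from there at most \<open>r\<close> up-steps of size at most \<open>1/r\<close> cannot
  carry it above 1; so the last \<open>r + 1\<close> steps before leaving above 1 must all be up-steps.\<close>

lemma alpha_gt_one: "1/2 < p \<Longrightarrow> p < 1 \<Longrightarrow> 1 < alpha p"
  by (simp add: alpha_def field_simps)

lemma eta_eq_log_alpha:
  assumes "p < 1"
  shows "eta p \<epsilon> = log (alpha p) ((alpha p + \<epsilon>) / (1 + alpha p * \<epsilon>))"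
proof -
  have "1 - p \<noteq> 0"
    using assms by simp
  then have "alpha p + \<epsilon> = (p + (1 - p) * \<epsilon>) / (1 - p)"
    and "1 + alpha p * \<epsilon> = (1 - p * (1 - \<epsilon>)) / (1 - p)"
    by (simp_all add: alpha_def field_simps)
  with \<open>1 - p \<noteq> 0\<close>
  have "(p + (1 - p) * \<epsilon>) / (1 - p * (1 - \<epsilon>)) = (alpha p + \<epsilon>) / (1 + alpha p * \<epsilon>)"
    by simp
  then show ?thesis
    by (simp add: eta_def log_def)
qed

lemma eps_r_eq:
  assumes "1 < alpha p"
  shows "eps_r p r = (alpha p - alpha p powr (1 / real r)) / (alpha p * alpha p powr (1 / real r) - 1)"
  using assms by (simp add: eps_r_def powr_add powr_one mult.commute)

lemma moebius_strict_antimono: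
  fixes A x y :: real
  assumes "1 < A" "1 < y" "y < x"
  shows "(A - x) / (A * x - 1) < (A - y) / (A * y - 1)"
proof -
  have "1 < A * x" "1 < A * y"
    using assms less_1_mult[OF \<open>1 < A\<close>] by simp_all
  moreover have "0 < (A * A - 1) * (x - y)"
    using assms less_1_mult[OF \<open>1 < A\<close> \<open>1 < A\<close>] by simp
  moreover have "(A * A - 1) * (x - y) = (A - y) * (A * x - 1) - (A - x) * (A * y - 1)"
    by (simp add: algebra_simps)
  ultimately show ?thesis
    by (simp add: divide_simps)
qed

lemma moebius_le_iff:
  fixes A B \<epsilon> :: real
  assumes "1 < A" "1 \<le> B" "0 \<le> \<epsilon>"
  shows "(A - B) / (A * B - 1) \<le> \<epsilon> \<longleftrightarrow> (A + \<epsilon>) / (1 + A * \<epsilon>) \<le> B"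
proof -
  have "1 < A * B"
    using assms by (metis less_1_mult mult.right_neutral order_le_less)
  moreover have "0 < 1 + A * \<epsilon>"
    using assms by (simp add: add_pos_nonneg)
  ultimately show ?thesis
    by (simp add: divide_simps algebra_simps)
qed

lemma eps_r_strict_mono:
  assumes "1/2 < p" "p < 1"
  shows "strict_mono_on {1..} (eps_r p)"
proof (rule strict_mono_onI)
  fix m n :: nat
  assume "m \<in> {1..}" "m < n"
  then have "1 \<le> m" by simp
  have A: "1 < alpha p"
    using assms by (rule alpha_gt_one)
  have "1 / real n < 1 / real m"
    using \<open>1 \<le> m\<close> \<open>m < n\<close> by (simp add: frac_less2)
  then have "alpha p powr (1 / real n) < alpha p powr (1 / real m)"
    using A by simp
  moreover have "1 < alpha p powr (1 / real n)"
    using A \<open>1 \<le> m\<close> \<open>m < n\<close> by simp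
  ultimately show "eps_r p m < eps_r p n"
    unfolding eps_r_eq[OF A] using moebius_strict_antimono[OF A] by blast
qed

lemma eta_le_inverse_if_eps_r_le:
  assumes "1/2 < p" "p < 1" "1 \<le> r" "0 \<le> \<epsilon>" "eps_r p r \<le> \<epsilon>"
  shows "eta p \<epsilon> \<le> 1 / real r"
proof -
  define A where "A = alpha p"
  define B where "B = A powr (1 / real r)"
  have A: "1 < A"
    unfolding A_def using alpha_gt_one[OF assms(1,2)] .
  have B: "1 \<le> B"
    unfolding B_def using A by (simp add: ge_one_powr_ge_zero)
  have "(A - B) / (A * B - 1) \<le> \<epsilon>"
    using assms(5) unfolding eps_r_eq[OF alpha_gt_one[OF assms(1,2)]] A_def B_def .
  then have "(A + \<epsilon>) / (1 + A * \<epsilon>) \<le> B"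
    using moebius_le_iff[OF A B assms(4)] by blast
  moreover have "0 < (A + \<epsilon>) / (1 + A * \<epsilon>)"
    using A assms(4) by (simp add: add_pos_nonneg)
  ultimately have "log A ((A + \<epsilon>) / (1 + A * \<epsilon>)) \<le> log A B"
    using A B by simp
  also have "log A B = 1 / real r"
    unfolding B_def using A by simp
  finally show ?thesis
    unfolding eta_eq_log_alpha[OF assms(2)] A_def .
qed

lemma walk_h_Suc: "walk_h p \<epsilon> s (Suc n) = walk_h p \<epsilon> s n + (if s n then eta p \<epsilon> else -1)"
  by (simp add: walk_h_def)

lemma walk_h_increase_le:
  assumes "eta p \<epsilon> \<le> c" "-1 \<le> c" "k \<le> m"
  shows "walk_h p \<epsilon> s m \<le> walk_h p \<epsilon> s k + real (m - k) * c"
  using assms(3)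
proof (induction m rule: dec_induct)
  case base
  then show ?case by simp
next
  case (step m)
  have "walk_h p \<epsilon> s (Suc m) \<le> walk_h p \<epsilon> s m + c"
    using assms(1,2) by (simp add: walk_h_Suc)
  then show ?case
    using step by (simp add: Suc_diff_le algebra_simps)
qed

lemma walk_h_stays_le_one:
  assumes "eta p \<epsilon> \<le> 1 / real r" "walk_h p \<epsilon> s k \<le> 0" "k \<le> n" "n - k \<le> r"
  shows "walk_h p \<epsilon> s n \<le> 1"
proof -
  have "walk_h p \<epsilon> s n \<le> walk_h p \<epsilon> s k + real (n - k) * (1 / real r)"
    using walk_h_increase_le[OF assms(1) _ assms(3)] by (simp add: order_trans[of _ 0])
  also have "real (n - k) * (1 / real r) \<le> 1"
    using assms(4) by (cases "r = 0") (simp_all add: divide_simps)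
  finally show ?thesis
    using assms(2) by simp
qed

lemma leaves_above_at_after_up_steps:
  assumes "eta p \<epsilon> \<le> 1 / real r" "leaves_above_at p \<epsilon> s n"
  shows "r + 1 \<le> n \<and> (\<forall>i. n - (r + 1) \<le> i \<and> i < n \<longrightarrow> s i)"
proof -
  have above: "1 < walk_h p \<epsilon> s n" and inside: "\<And>k. k < n \<Longrightarrow> walk_h p \<epsilon> s k \<le> 1"
    using assms(2) unfolding leaves_above_at_def by auto
  have "r + 1 \<le> n"
  proof (rule ccontr)
    assume "\<not> r + 1 \<le> n"
    then have "walk_h p \<epsilon> s n \<le> 1"
      using walk_h_stays_le_one[OF assms(1), of s 0 n] by (simp add: walk_h_def)
    with above show False by simp
  qed
  moreover have "s i" if "n - (r + 1) \<le> i" "i < n" for i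
  proof (rule ccontr)
    assume "\<not> s i"
    then have "walk_h p \<epsilon> s (Suc i) \<le> 0"
      using inside[OF \<open>i < n\<close>] by (simp add: walk_h_Suc)
    then have "walk_h p \<epsilon> s n \<le> 1"
      using walk_h_stays_le_one[OF assms(1)] that by simp
    with above show False by simp
  qed
  ultimately show ?thesis by blast
qed

theorem lemma2:
  fixes p :: real
  assumes "1/2 < p" and "p < 1"
  shows "strict_mono_on {1..} (eps_r p) \<and>
    (\<forall>r::nat. \<forall>\<epsilon>::real. \<forall>s::nat \<Rightarrow> bool. \<forall>n::nat.
       1 \<le> r \<longrightarrow> 0 \<le> \<epsilon> \<longrightarrow> \<epsilon> < 1 \<longrightarrow>
       eps_r p r \<le> \<epsilon> \<longrightarrow> \<epsilon> < eps_r p (Suc r) \<longrightarrow>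
       leaves_above_at p \<epsilon> s n \<longrightarrow>
       r + 1 \<le> n \<and> (\<forall>i. n - (r + 1) \<le> i \<and> i < n \<longrightarrow> s i))"
  using eps_r_strict_mono[OF assms]
    leaves_above_at_after_up_steps[OF eta_le_inverse_if_eps_r_le[OF assms]]
  by blast

end
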